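(* Every CPA-structure on a finite-dimensional complex semisimple Lie algebra is trivial. Furthermore, every CPA-structure on a finite-dimensional complex Lie algebra $\mathfrak{g}$ satisfies $\mathfrak{g}\cdot\mathfrak{g}\subseteq\mathrm{rad}(\mathfrak{g})$, where $\mathrm{rad}(\mathfrak{g})$ is the solvable radical.
   Context: A CPA-structure on a Lie algebra $\mathfrak{g}$ is a bilinear product $x\cdot y$ on $\mathfrak{g}$ satisfying, for all $x,y,z$: $x\cdot y=y\cdot x$; $[x,y]\cdot z=x\cdot(y\cdot z)-y\cdot(x\cdot z)$; $x\cdot[y,z]=[x\cdot y,z]+[y,x\cdot z]$. It is trivial if $x\cdot y=0$ for all $x,y$. *)

theory Defs
  imports Complex_Main
begin

text \<open>A complex Lie algebra: the carrier is the whole type 'a, with complex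
  scalar multiplication sc and Lie bracket br.\<close>

definition bilinear_map :: "(complex \<Rightarrow> 'a::ab_group_add \<Rightarrow> 'a) \<Rightarrow> ('a \<Rightarrow> 'a \<Rightarrow> 'a) \<Rightarrow> bool" where
  "bilinear_map sc p \<longleftrightarrow>
     (\<forall>x. Vector_Spaces.linear sc sc (p x)) \<and> (\<forall>y. Vector_Spaces.linear sc sc (\<lambda>x. p x y))"

definition lie_algebra :: "(complex \<Rightarrow> 'a::ab_group_add \<Rightarrow> 'a) \<Rightarrow> ('a \<Rightarrow> 'a \<Rightarrow> 'a) \<Rightarrow> bool" where
  "lie_algebra sc br \<longleftrightarrow>
     vector_space sc \<and> bilinear_map sc br \<and>
     (\<forall>x. br x x = 0) \<and>
     (\<forall>x y z. br x (br y z) + br y (br z x) + br z (br x y) = 0)"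

definition finite_dim :: "(complex \<Rightarrow> 'a::ab_group_add \<Rightarrow> 'a) \<Rightarrow> bool" where
  "finite_dim sc \<longleftrightarrow> (\<exists>B. finite B \<and> module.span sc B = UNIV)"

definition lie_ideal :: "(complex \<Rightarrow> 'a::ab_group_add \<Rightarrow> 'a) \<Rightarrow> ('a \<Rightarrow> 'a \<Rightarrow> 'a) \<Rightarrow> 'a set \<Rightarrow> bool" where
  "lie_ideal sc br I \<longleftrightarrow> module.subspace sc I \<and> (\<forall>x y. y \<in> I \<longrightarrow> br x y \<in> I)"

fun derived_series :: "(complex \<Rightarrow> 'a::ab_group_add \<Rightarrow> 'a) \<Rightarrow> ('a \<Rightarrow> 'a \<Rightarrow> 'a) \<Rightarrow> 'a set \<Rightarrow> nat \<Rightarrow> 'a set" where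
  "derived_series sc br I 0 = I"
| "derived_series sc br I (Suc k) =
     module.span sc {br x y | x y. x \<in> derived_series sc br I k \<and> y \<in> derived_series sc br I k}"

definition solvable_set :: "(complex \<Rightarrow> 'a::ab_group_add \<Rightarrow> 'a) \<Rightarrow> ('a \<Rightarrow> 'a \<Rightarrow> 'a) \<Rightarrow> 'a set \<Rightarrow> bool" where
  "solvable_set sc br I \<longleftrightarrow> (\<exists>k. derived_series sc br I k = {0})"

definition lie_radical :: "(complex \<Rightarrow> 'a::ab_group_add \<Rightarrow> 'a) \<Rightarrow> ('a \<Rightarrow> 'a \<Rightarrow> 'a) \<Rightarrow> 'a set" where
  "lie_radical sc br = module.span sc (\<Union>{I. lie_ideal sc br I \<and> solvable_set sc br I})"

definition semisimple :: "(complex \<Rightarrow> 'a::ab_group_add \<Rightarrow> 'a) \<Rightarrow> ('a \<Rightarrow> 'a \<Rightarrow> 'a) \<Rightarrow> bool" where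
  "semisimple sc br \<longleftrightarrow> (\<forall>I. lie_ideal sc br I \<and> solvable_set sc br I \<longrightarrow> I = {0})"

definition CPA_structure :: "(complex \<Rightarrow> 'a::ab_group_add \<Rightarrow> 'a) \<Rightarrow> ('a \<Rightarrow> 'a \<Rightarrow> 'a) \<Rightarrow> ('a \<Rightarrow> 'a \<Rightarrow> 'a) \<Rightarrow> bool" where
  "CPA_structure sc br m \<longleftrightarrow>
     bilinear_map sc m \<and>
     (\<forall>x y. m x y = m y x) \<and>
     (\<forall>x y z. m (br x y) z = m x (m y z) - m y (m x z)) \<and>
     (\<forall>x y z. m x (br y z) = br (m x y) z + br y (m x z))"

end

theory Submission
  imports Defs "HOL-Computational_Algebra.Computational_Algebra" "HOL-Computational_Algebra.Field_as_Ring"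
begin

text \<open>If \<open>m\<close> is a CPA-structure, every left multiplication \<open>m x\<close> is a derivation, so the
  Killing form satisfies \<open>\<kappa>(m x y, z) = - \<kappa>(y, m x z)\<close>. The trilinear form \<open>\<kappa>(m x y, z)\<close>
  is therefore symmetric in its first two and antisymmetric in its last two arguments, hence zero:
  all products lie in the radical \<open>K\<close> of the Killing form. This ideal is solvable, by the argument
  behind Cartan's criterion. For \<open>x \<in> [K, \<g>]\<close> one has \<open>tr(ad x \<circ> E) = 0\<close> for every derivation
  \<open>E\<close>. Taking for \<open>E\<close> the derivation that acts on each generalized eigenspace of \<open>ad x\<close> by the
  complex conjugate of its eigenvalue gives \<open>\<Sum> |z\<^sub>i|\<^sup>2 = 0\<close> over the eigenvalues of \<open>ad x\<close>,
  so \<open>ad x\<close> is nilpotent. By Engel's theorem \<open>[K, K]\<close> is nilpotent, so \<open>K\<close> is solvable.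
  Hence \<open>K \<subseteq> rad(\<g>)\<close>, and \<open>K = 0\<close> if \<open>\<g>\<close> is semisimple.\<close>

lemma coprime_linear_factor_powers:
  fixes z :: "'a::field_gcd"
  assumes "z \<notin> S"
  shows "coprime ([:-z, 1:] ^ k) (\<Prod>x\<in>S. [:-x, 1:] ^ m)"
proof -
  have "coprime [:-z, 1:] [:-x, 1:]" if "x \<in> S" for x
  proof (rule coprimeI)
    fix c assume "c dvd [:-z, 1:]" "c dvd [:-x, 1:]"
    then have "c dvd [:-z, 1:] - [:-x, 1:]" by (rule dvd_diff)
    then have "c dvd [:x - z:]" by simp
    moreover have "x \<noteq> z" using that assms by auto
    ultimately show "is_unit c" by (simp add: dvd_unit_imp_unit is_unit_triv)
  qed
  then show ?thesis by (simp add: prod_coprime_right)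
qed

lemma coprime_bezout_poly:
  fixes A B :: "'a::field_gcd poly"
  assumes "coprime A B"
  shows "\<exists>a b. a * A + b * B = 1"
  using bezout_coefficients_fst_snd[of A B] coprime_imp_gcd_eq_1[OF assms] by auto

text \<open>Hermite interpolation, i.e. the Chinese remainder theorem for the pairwise coprime
  moduli \<open>(X - z)^M\<close>.\<close>
lemma ex_poly_congruent_constants:
  fixes c :: "'a::field_gcd \<Rightarrow> 'a"
  assumes "finite S"
  shows "\<exists>q. \<forall>z\<in>S. [:-z, 1:] ^ M dvd q - [:c z:]"
  using assms
proof (induction S rule: finite_induct)
  case (insert z S)
  obtain qS where qS: "\<forall>x\<in>S. [:-x, 1:] ^ M dvd qS - [:c x:]" using insert.IH by blast
  let ?A = "[:-z, 1:] ^ M" and ?B = "\<Prod>x\<in>S. [:-x, 1:] ^ M"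
  obtain a b where ab: "a * ?A + b * ?B = 1"
    using coprime_bezout_poly[OF coprime_linear_factor_powers[OF insert.hyps(2)]] by blast
  define q where "q = qS - (qS - [:c z:]) * b * ?B"
  have "q - [:c z:] = (qS - [:c z:]) * (1 - b * ?B)" by (simp add: q_def algebra_simps)
  also have "1 - b * ?B = a * ?A" using ab by (metis add_diff_cancel_right')
  finally have "?A dvd q - [:c z:]" by simp
  moreover have "[:-x, 1:] ^ M dvd q - [:c x:]" if x: "x \<in> S" for x
  proof -
    have "[:-x, 1:] ^ M dvd ?B" using insert.hyps(1) x by (rule dvd_prodI)
    then have "[:-x, 1:] ^ M dvd (qS - [:c x:]) - (qS - [:c z:]) * b * ?B"
      using qS x by (intro dvd_diff[of _ "qS - [:c x:]"] dvd_mult) auto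
    then show ?thesis by (simp add: q_def algebra_simps)
  qed
  ultimately show ?case by blast
qed simp

lemma funpow_enters_set:
  assumes "\<And>u. u \<in> U \<Longrightarrow> g u \<in> U" "w \<in> U" "w \<notin> W" "(g ^^ k) w \<in> W"
  shows "\<exists>u\<in>U. u \<notin> W \<and> g u \<in> W"
  using assms(4)
proof (induction k)
  case (Suc k)
  have "(g ^^ k) w \<in> U" by (induction k) (use assms(1,2) in auto)
  then show ?case using Suc by (cases "(g ^^ k) w \<in> W") auto
qed (use assms in simp)

section \<open>Linear algebra over \<open>\<complex>\<close>\<close>

locale fd_complex_space = vector_space sc for sc :: "complex \<Rightarrow> 'a::ab_group_add \<Rightarrow> 'a" +
  assumes finite_dim: "finite_dim sc"
begin

sublocale endo: vector_space_pair sc sc ..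

abbreviation linear_endo :: "('a \<Rightarrow> 'a) \<Rightarrow> bool" where
  "linear_endo \<equiv> Vector_Spaces.linear sc sc"

lemma linear_endo_ident: "linear_endo (\<lambda>x. x)"
  by (simp add: Vector_Spaces.linear_iff vector_space_axioms)

lemma linear_endo_comp: "linear_endo f \<Longrightarrow> linear_endo g \<Longrightarrow> linear_endo (\<lambda>x. f (g x))"
  using Vector_Spaces.linear_compose[of sc sc g sc f] by (simp add: comp_def)

lemma linear_endo_funpow: "linear_endo f \<Longrightarrow> linear_endo (f ^^ k)"
  by (induction k) (simp_all add: linear_endo_ident linear_endo_comp comp_def id_def)

lemma linear_endo_shift: "linear_endo f \<Longrightarrow> linear_endo (\<lambda>x. f x - sc c x)"
  by (intro endo.linear_compose_sub endo.linear_compose_scale_right linear_endo_ident)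

lemma linear_endo_in_span:
  assumes "linear_endo f" "\<And>x. x \<in> S \<Longrightarrow> f x \<in> T" "subspace T" "x \<in> span S"
  shows "f x \<in> T"
  using assms(4)
proof (induction rule: span_induct_alt)
  case base then show ?case using assms by (simp add: endo.linear_0 subspace_0)
next
  case (step c x y) then show ?case using assms
    by (simp add: endo.linear_add endo.linear_scale subspace_add subspace_scale)
qed

definition finite_basis :: "'a set \<Rightarrow> bool" where
  "finite_basis C \<longleftrightarrow> finite C \<and> independent C \<and> span C = UNIV"

lemma ex_finite_basis: "\<exists>C. finite_basis C"
proof -
  obtain B where B: "finite B" "span B = UNIV" using finite_dim unfolding finite_dim_def by blast
  obtain C where C: "C \<subseteq> B" "independent C" "B \<subseteq> span C"
    using maximal_independent_subset[of B] by blast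
  have "span C = UNIV" using B(2) C(3) span_minimal[OF C(3)] by auto
  then show ?thesis using C(1,2) B(1) finite_subset unfolding finite_basis_def by blast
qed

definition fd_basis :: "'a set" where "fd_basis = (SOME C. finite_basis C)"

lemma finite_basis_fd_basis: "finite_basis fd_basis"
  unfolding fd_basis_def by (rule someI_ex[OF ex_finite_basis])

sublocale fd: finite_dimensional_vector_space sc fd_basis
  by unfold_locales (use finite_basis_fd_basis in \<open>auto simp: finite_basis_def\<close>)

lemma representation_finite_basis_comb:
  "finite_basis C \<Longrightarrow> representation C (\<Sum>i\<in>B. sc (a i) (v i)) c = (\<Sum>i\<in>B. a i * representation C (v i) c)"
  by (simp add: finite_basis_def representation_sum representation_scale)

lemma sum_representation_finite_basis: "finite_basis C \<Longrightarrow> (\<Sum>c\<in>C. sc (representation C v c) c) = v"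
  unfolding finite_basis_def by (rule sum_representation_eq) auto

lemma finite_basis_list:
  assumes "distinct bs" "independent (set bs)" "length bs = dim (UNIV :: 'a set)"
  shows "finite_basis (set bs)"
  using assms fd.card_eq_dim[of "set bs" UNIV] by (auto simp: finite_basis_def distinct_card)

lemma trace_basis_independent:
  assumes B: "finite_basis B" and C: "finite_basis C" and f: "linear_endo f"
  shows "(\<Sum>b\<in>B. representation B (f b) b) = (\<Sum>c\<in>C. representation C (f c) c)"
proof -
  let ?RB = "representation B" and ?RC = "representation C"
  have "(\<Sum>b\<in>B. ?RB (f b) b) = (\<Sum>b\<in>B. ?RB (f (\<Sum>c\<in>C. sc (?RC b c) c)) b)"
    using sum_representation_finite_basis[OF C] by simp
  also have "\<dots> = (\<Sum>b\<in>B. \<Sum>c\<in>C. ?RC b c * ?RB (f c) b)"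
    using f B by (simp add: endo.linear_sum endo.linear_scale representation_finite_basis_comb)
  also have "\<dots> = (\<Sum>c\<in>C. \<Sum>b\<in>B. ?RB (f c) b * ?RC b c)"
    by (subst sum.swap) (simp add: mult.commute)
  also have "\<dots> = (\<Sum>c\<in>C. ?RC (f c) c)"
    using C sum_representation_finite_basis[OF B]
    by (simp add: representation_finite_basis_comb[symmetric])
  finally show ?thesis .
qed

definition trace :: "('a \<Rightarrow> 'a) \<Rightarrow> complex" where
  "trace f = (\<Sum>b\<in>fd_basis. representation fd_basis (f b) b)"

lemma trace_eq_finite_basis:
  "finite_basis C \<Longrightarrow> linear_endo f \<Longrightarrow> trace f = (\<Sum>c\<in>C. representation C (f c) c)"
  unfolding trace_def by (rule trace_basis_independent[OF finite_basis_fd_basis])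

lemma trace_comp_commute:
  assumes "linear_endo f" "linear_endo g"
  shows "trace (\<lambda>x. f (g x)) = trace (\<lambda>x. g (f x))"
proof -
  let ?R = "representation fd_basis"
  have expand: "trace (\<lambda>x. f (g x)) = (\<Sum>b\<in>fd_basis. \<Sum>b'\<in>fd_basis. ?R (g b) b' * ?R (f b') b)"
    if "linear_endo f" for f g
  proof -
    have "trace (\<lambda>x. f (g x)) = (\<Sum>b\<in>fd_basis. ?R (f (\<Sum>b'\<in>fd_basis. sc (?R (g b) b') b')) b)"
      unfolding trace_def using sum_representation_finite_basis[OF finite_basis_fd_basis] by simp
    also have "\<dots> = (\<Sum>b\<in>fd_basis. \<Sum>b'\<in>fd_basis. ?R (g b) b' * ?R (f b') b)"
      using that finite_basis_fd_basis
      by (simp add: endo.linear_sum endo.linear_scale representation_finite_basis_comb)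
    finally show ?thesis .
  qed
  show ?thesis
    unfolding expand[OF assms(1)] expand[OF assms(2)]
    by (subst (2) sum.swap) (simp add: mult.commute)
qed

lemma trace_add: "trace (\<lambda>x. f x + g x) = trace f + trace g"
  using finite_basis_fd_basis
  by (simp add: trace_def finite_basis_def representation_add sum.distrib)

lemma trace_diff: "trace (\<lambda>x. f x - g x) = trace f - trace g"
  using finite_basis_fd_basis
  by (simp add: trace_def finite_basis_def representation_diff sum_subtractf)

lemma trace_scale: "trace (\<lambda>x. sc c (f x)) = c * trace f"
  using finite_basis_fd_basis
  by (simp add: trace_def finite_basis_def representation_scale sum_distrib_left)

lemma trace_zero: "trace (\<lambda>x. 0) = 0"
  by (simp add: trace_def representation_zero)

lemma trace_neg: "trace (\<lambda>x. - f x) = - trace f"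
  using trace_diff[of "\<lambda>x. 0" f] by (simp add: trace_zero)

definition poly_endo :: "complex poly \<Rightarrow> ('a \<Rightarrow> 'a) \<Rightarrow> 'a \<Rightarrow> 'a" where
  "poly_endo p f v = (\<Sum>i\<le>degree p. sc (coeff p i) ((f ^^ i) v))"

lemma poly_endo_degree_le:
  assumes "degree p \<le> n"
  shows "poly_endo p f v = (\<Sum>i\<le>n. sc (coeff p i) ((f ^^ i) v))"
  unfolding poly_endo_def
  by (rule sum.mono_neutral_left) (use assms in \<open>auto simp: coeff_eq_0\<close>)

lemma poly_endo_add: "poly_endo (p + q) f v = poly_endo p f v + poly_endo q f v"
proof -
  let ?n = "max (degree p) (degree q)"
  have "poly_endo (p + q) f v = (\<Sum>i\<le>?n. sc (coeff (p + q) i) ((f ^^ i) v))"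
    by (rule poly_endo_degree_le) (simp add: degree_add_le)
  also have "\<dots> = poly_endo p f v + poly_endo q f v"
    by (simp add: poly_endo_degree_le[of _ ?n] scale_left_distrib sum.distrib)
  finally show ?thesis .
qed

lemma poly_endo_smult: "poly_endo (smult c p) f v = sc c (poly_endo p f v)"
  by (simp add: poly_endo_degree_le[OF degree_smult_le] poly_endo_def scale_sum_right)

lemma poly_endo_0: "poly_endo 0 f v = 0"
  by (simp add: poly_endo_def)

lemma poly_endo_diff: "poly_endo (p - q) f v = poly_endo p f v - poly_endo q f v"
proof -
  have "p - q = p + smult (-1) q" by simp
  then have "poly_endo (p - q) f v = poly_endo p f v + sc (-1) (poly_endo q f v)"
    by (simp only: poly_endo_add poly_endo_smult)
  then show ?thesis by (simp add: scale_minus_left)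
qed

lemma poly_endo_const: "poly_endo [:c:] f v = sc c v"
  by (simp add: poly_endo_def)

lemma poly_endo_1: "poly_endo 1 f v = v"
  using poly_endo_const[of 1 f v] by (simp add: one_pCons)

lemma poly_endo_monom: "poly_endo (monom c k) f v = sc c ((f ^^ k) v)"
proof -
  have "poly_endo (monom c k) f v = (\<Sum>i\<le>k. sc (coeff (monom c k) i) ((f ^^ i) v))"
    by (rule poly_endo_degree_le[OF degree_monom_le])
  also have "\<dots> = (\<Sum>i\<le>k. if i = k then sc c ((f ^^ k) v) else 0)"
    by (rule sum.cong) auto
  finally show ?thesis by simp
qed

lemma poly_endo_sum: "poly_endo (\<Sum>i\<in>I. p i) f v = (\<Sum>i\<in>I. poly_endo (p i) f v)"
  by (induction I rule: infinite_finite_induct) (simp_all add: poly_endo_add poly_endo_0)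

context
  fixes f assumes f: "linear_endo f"
begin

lemma linear_poly_endo: "linear_endo (poly_endo p f)"
  unfolding poly_endo_def
  by (intro endo.linear_compose_sum ballI endo.linear_compose_scale_right linear_endo_funpow f)

lemma poly_endo_zero_vec: "poly_endo p f 0 = 0"
  by (rule endo.linear_0[OF linear_poly_endo])

lemma poly_endo_pCons: "poly_endo (pCons a p) f v = sc a v + f (poly_endo p f v)"
proof -
  have "poly_endo (pCons a p) f v = (\<Sum>i\<le>Suc (degree p). sc (coeff (pCons a p) i) ((f ^^ i) v))"
    by (rule poly_endo_degree_le[OF degree_pCons_le])
  also have "\<dots> = sc a v + (\<Sum>i\<le>degree p. sc (coeff p i) ((f ^^ Suc i) v))"
    by (subst sum.atMost_Suc_shift) simp
  also have "(\<Sum>i\<le>degree p. sc (coeff p i) ((f ^^ Suc i) v)) = f (poly_endo p f v)"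
    unfolding poly_endo_def using f by (simp add: endo.linear_sum endo.linear_scale)
  finally show ?thesis .
qed

lemma poly_endo_mult: "poly_endo (p * q) f v = poly_endo p f (poly_endo q f v)"
proof (induction p)
  case (pCons a p)
  have "poly_endo (pCons a p * q) f v = poly_endo (smult a q) f v + poly_endo (pCons 0 (p * q)) f v"
    by (simp add: poly_endo_add)
  then show ?case
    by (simp add: poly_endo_smult poly_endo_pCons pCons)
qed (simp add: poly_endo_0)

lemma poly_endo_linear_factor_power:
  "poly_endo ([:-z, 1:] ^ k) f v = ((\<lambda>x. f x - sc z x) ^^ k) v"
proof (induction k arbitrary: v)
  case (Suc k)
  have "poly_endo [:-z, 1:] f v = f v - sc z v"
    by (simp add: poly_endo_pCons poly_endo_0 endo.linear_0[OF f] scale_minus_left)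
  then show ?case
    by (simp only: power_Suc2 poly_endo_mult Suc funpow_Suc_right o_apply)
qed (simp add: poly_endo_1)

lemma poly_endo_annihilates_multiple:
  assumes "p dvd q" "\<And>v. poly_endo p f v = 0"
  shows "poly_endo q f v = 0"
  using assms by (auto elim!: dvdE simp: mult.commute[of p] poly_endo_mult poly_endo_zero_vec)

end

lemma ex_poly_annihilating_vector:
  assumes f: "linear_endo f"
  shows "\<exists>p. p \<noteq> 0 \<and> poly_endo p f v = 0"
proof -
  define n where "n = dim (UNIV::'a set)"
  define g where "g i = (f ^^ i) v" for i
  show ?thesis
  proof (cases "inj_on g {..n}")
    case False
    then obtain i j where ij: "i \<noteq> j" "g i = g j" unfolding inj_on_def by auto
    have "coeff (monom (1::complex) i - monom 1 j) i \<noteq> 0" using ij(1) by simp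
    then have "monom 1 i - monom (1::complex) j \<noteq> 0" by (metis coeff_0)
    moreover have "poly_endo (monom 1 i - monom 1 j) f v = 0"
      using ij(2) by (simp add: poly_endo_diff poly_endo_monom g_def)
    ultimately show ?thesis by blast
  next
    case True
    let ?S = "g ` {..n}"
    have "\<not> independent ?S"
    proof
      assume "independent ?S"
      then have "card ?S \<le> n" using fd.independent_card_le_dim[of ?S UNIV] by (simp add: n_def)
      then show False using card_image[OF True] by simp
    qed
    then obtain u where u: "\<exists>w\<in>?S. u w \<noteq> 0" "(\<Sum>w\<in>?S. sc (u w) w) = 0"
      using dependent_finite[of ?S] by auto
    define p where "p = (\<Sum>i\<le>n. monom (u (g i)) i)"
    have "poly_endo p f v = (\<Sum>i\<le>n. sc (u (g i)) (g i))"
      by (simp add: p_def poly_endo_sum poly_endo_monom g_def)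
    also have "\<dots> = (\<Sum>w\<in>?S. sc (u w) w)" by (simp add: sum.reindex[OF True])
    finally have "poly_endo p f v = 0" using u(2) by simp
    moreover obtain i where "i \<le> n" "u (g i) \<noteq> 0" using u(1) by auto
    then have "coeff p i \<noteq> 0" by (simp add: p_def coeff_sum)
    then have "p \<noteq> 0" by auto
    ultimately show ?thesis by blast
  qed
qed

lemma ex_annihilating_poly:
  assumes f: "linear_endo f"
  shows "\<exists>P. P \<noteq> 0 \<and> (\<forall>v. poly_endo P f v = 0)"
proof -
  obtain p where p: "\<And>b. p b \<noteq> 0" "\<And>b. poly_endo (p b) f b = 0"
    using ex_poly_annihilating_vector[OF f] by metis
  define P where "P = (\<Prod>b\<in>fd_basis. p b)"
  have fin: "finite fd_basis" and span: "span fd_basis = UNIV"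
    using finite_basis_fd_basis by (auto simp: finite_basis_def)
  have "poly_endo P f b = 0" if b: "b \<in> fd_basis" for b
  proof -
    obtain h where "P = p b * h" using dvd_prodI[OF fin b, of p] unfolding P_def by (elim dvdE)
    then show ?thesis
      using p(2) by (simp add: mult.commute[of "p b"] poly_endo_mult[OF f] poly_endo_zero_vec[OF f])
  qed
  then have "poly_endo P f v \<in> {0}" for v
    using linear_endo_in_span[OF linear_poly_endo[OF f], where S = fd_basis and T = "{0}" and x = v]
      span by auto
  moreover have "P \<noteq> 0" unfolding P_def using p(1) fin by simp
  ultimately show ?thesis by blast
qed

text \<open>Over \<open>\<complex>\<close> every annihilating polynomial divides one of the form
  \<open>\<Prod>z\<in>R. (X - z)^N\<close>, with \<open>R\<close> its roots and \<open>N\<close> exceeding every multiplicity.\<close>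
lemma ex_annihilating_root_product:
  assumes f: "linear_endo f"
  shows "\<exists>R N. finite R \<and> 0 < N \<and> (\<forall>v. poly_endo (\<Prod>z\<in>R. [:-z, 1:] ^ N) f v = 0)"
proof -
  obtain P where P: "P \<noteq> 0" "\<And>v. poly_endo P f v = 0" using ex_annihilating_poly[OF f] by blast
  define R where "R = {z. poly P z = 0}"
  define N where "N = Suc (degree P)"
  have "order z P \<le> N" for z
    using order_degree[OF P(1), of z] by (simp add: N_def)
  then have "(\<Prod>z\<in>R. [:-z, 1:] ^ order z P) dvd (\<Prod>z\<in>R. [:-z, 1:] ^ N)"
    by (intro prod_dvd_prod le_imp_power_dvd)
  moreover have "P = smult (lead_coeff P) (\<Prod>z\<in>R. [:-z, 1:] ^ order z P)"
    unfolding R_def by (rule complex_poly_decompose[symmetric])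
  moreover have "lead_coeff P \<noteq> 0" using P(1) by simp
  ultimately have "P dvd (\<Prod>z\<in>R. [:-z, 1:] ^ N)" by (metis smult_dvd)
  then have "\<forall>v. poly_endo (\<Prod>z\<in>R. [:-z, 1:] ^ N) f v = 0"
    using poly_endo_annihilates_multiple[OF f _ P(2)] by blast
  moreover have "finite R" unfolding R_def using poly_roots_finite[OF P(1)] .
  moreover have "0 < N" by (simp add: N_def)
  ultimately show ?thesis by blast
qed

definition triangular_basis :: "('a \<Rightarrow> 'a) \<Rightarrow> 'a list \<Rightarrow> (nat \<Rightarrow> complex) \<Rightarrow> bool" where
  "triangular_basis f bs z \<longleftrightarrow> distinct bs \<and> finite_basis (set bs) \<and>
     (\<forall>i<length bs. f (bs ! i) - sc (z i) (bs ! i) \<in> span (set (take i bs)))"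

lemma length_triangular_basis: "triangular_basis f bs z \<Longrightarrow> length bs = dim (UNIV :: 'a set)"
  using dim_span_eq_card_independent[of "set bs"]
  by (simp add: triangular_basis_def finite_basis_def distinct_card)

lemma span_take_mono: "i \<le> j \<Longrightarrow> span (set (take i bs)) \<subseteq> span (set (take j bs))"
  by (rule span_mono[OF set_take_subset_set_take])

context
  fixes f bs z
  assumes f: "linear_endo f" and tri: "triangular_basis f bs z"
begin

lemma triangular_basis_span_take_invariant:
  assumes "v \<in> span (set (take i bs))"
  shows "f v \<in> span (set (take i bs))"
proof (rule linear_endo_in_span[OF f _ subspace_span assms])
  fix x assume "x \<in> set (take i bs)"
  then obtain j where j: "j < i" "j < length bs" "x = bs ! j" by (auto simp: in_set_conv_nth)
  have "f x - sc (z j) x \<in> span (set (take i bs))"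
    using tri j span_take_mono[of j i bs] by (auto simp: triangular_basis_def)
  moreover have "x \<in> span (set (take i bs))" using j by (intro span_base) (auto simp: in_set_conv_nth)
  ultimately show "f x \<in> span (set (take i bs))"
    by (metis diff_add_cancel span_add span_scale)
qed

lemma poly_endo_triangular_basis:
  assumes i: "i < length bs"
  shows "\<exists>s\<in>span (set (take i bs)). poly_endo p f (bs ! i) = sc (poly p (z i)) (bs ! i) + s"
proof (induction p)
  case 0 then show ?case by (simp add: poly_endo_0 span_zero)
next
  case (pCons a p)
  then obtain s where s: "s \<in> span (set (take i bs))"
    "poly_endo p f (bs ! i) = sc (poly p (z i)) (bs ! i) + s" by blast
  define t where "t = f (bs ! i) - sc (z i) (bs ! i)"
  have t: "t \<in> span (set (take i bs))" using tri i by (simp add: triangular_basis_def t_def)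
  have "poly_endo (pCons a p) f (bs ! i)
      = sc (poly (pCons a p) (z i)) (bs ! i) + (sc (poly p (z i)) t + f s)"
    unfolding poly_endo_pCons[OF f] s(2) t_def
    by (simp add: endo.linear_add[OF f] endo.linear_scale[OF f] scale_right_diff_distrib
        scale_left_distrib algebra_simps)
  then show ?case
    using span_add span_scale t triangular_basis_span_take_invariant[OF s(1)] by blast
qed

lemma representation_triangular_basis:
  assumes i: "i < length bs" and s: "s \<in> span (set (take i bs))"
  shows "representation (set bs) (sc c (bs ! i) + s) (bs ! i) = c"
proof -
  have ind: "independent (set bs)" and sp: "span (set bs) = UNIV" and dist: "distinct bs"
    using tri by (auto simp: triangular_basis_def finite_basis_def)
  have "bs ! i \<notin> set (take i bs)"
    using dist i by (auto simp: in_set_conv_nth nth_eq_iff_index_eq)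
  moreover have "representation (set bs) s = representation (set (take i bs)) s"
    by (rule representation_extend[OF ind s set_take_subset])
  ultimately have "representation (set bs) s (bs ! i) = 0"
    by (metis representation_ne_zero)
  moreover have "representation (set bs) (bs ! i) (bs ! i) = 1"
    using representation_basis[OF ind] i by simp
  ultimately show ?thesis
    using ind sp by (simp add: representation_add representation_scale)
qed

lemma trace_poly_endo_triangular_basis:
  "trace (poly_endo p f) = (\<Sum>i<length bs. poly p (z i))"
proof -
  have basis: "finite_basis (set bs)" and dist: "distinct bs"
    using tri by (auto simp: triangular_basis_def)
  have "trace (poly_endo p f) = (\<Sum>b\<in>set bs. representation (set bs) (poly_endo p f b) b)"
    by (rule trace_eq_finite_basis[OF basis linear_poly_endo[OF f]])
  also have "\<dots> = (\<Sum>i<length bs. representation (set bs) (poly_endo p f (bs ! i)) (bs ! i))"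
    using dist by (simp add: sum_list_distinct_conv_sum_set[symmetric] sum_list_sum_nth atLeast0LessThan)
  also have "\<dots> = (\<Sum>i<length bs. poly p (z i))"
  proof (rule sum.cong[OF refl])
    fix i assume "i \<in> {..<length bs}"
    then have i: "i < length bs" by simp
    obtain s where "s \<in> span (set (take i bs))"
      "poly_endo p f (bs ! i) = sc (poly p (z i)) (bs ! i) + s"
      using poly_endo_triangular_basis[OF i] by blast
    then show "representation (set bs) (poly_endo p f (bs ! i)) (bs ! i) = poly p (z i)"
      using representation_triangular_basis[OF i] by simp
  qed
  finally show ?thesis .
qed

end

lemma triangular_basis_nilpotent:
  assumes f: "linear_endo f" and tri: "triangular_basis f bs (\<lambda>_. 0)"
  shows "(f ^^ length bs) v = 0"
proof -
  let ?n = "length bs"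
  have down: "f w \<in> span (set (take m bs))" if "w \<in> span (set (take (Suc m) bs))" for w m
  proof (rule linear_endo_in_span[OF f _ subspace_span that])
    fix x assume "x \<in> set (take (Suc m) bs)"
    then obtain j where j: "j < Suc m" "j < ?n" "x = bs ! j" by (auto simp: in_set_conv_nth)
    then show "f x \<in> span (set (take m bs))"
      using tri span_take_mono[of j m bs] by (auto simp: triangular_basis_def)
  qed
  have "(f ^^ k) v \<in> span (set (take (?n - k) bs))" if "k \<le> ?n" for k
    using that
  proof (induction k)
    case 0 then show ?case using tri by (simp add: triangular_basis_def finite_basis_def)
  next
    case (Suc k)
    then have "(f ^^ k) v \<in> span (set (take (Suc (?n - Suc k)) bs))" by (simp add: Suc_diff_Suc)
    then show ?case using down by simp
  qed
  from this[of ?n] show ?thesis by (simp add: span_empty)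
qed

end

locale annihilated_endo = fd_complex_space sc for sc :: "complex \<Rightarrow> 'a::ab_group_add \<Rightarrow> 'a" +
  fixes f :: "'a \<Rightarrow> 'a" and R :: "complex set" and N :: nat
  assumes linear: "linear_endo f" and finite_roots: "finite R" and N_pos: "0 < N"
    and annihilates: "\<And>v. poly_endo (\<Prod>z\<in>R. [:-z, 1:] ^ N) f v = 0"
begin

definition shift :: "complex \<Rightarrow> 'a \<Rightarrow> 'a" where "shift c v = f v - sc c v"

lemma linear_shift: "linear_endo (shift c)"
  unfolding shift_def[abs_def] by (rule linear_endo_shift[OF linear])

lemma poly_endo_linear_factor_power_shift: "poly_endo ([:-c, 1:] ^ k) f v = (shift c ^^ k) v"
  unfolding shift_def[abs_def] by (rule poly_endo_linear_factor_power[OF linear])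

definition gen_eigenspace :: "complex \<Rightarrow> 'a set" where
  "gen_eigenspace c = {v. (shift c ^^ N) v = 0}"

lemma span_gen_eigenspaces_subset:
  assumes "finite S" "poly_endo (\<Prod>z\<in>S. [:-z, 1:] ^ N) f v = 0"
  shows "v \<in> span (\<Union>z\<in>S. gen_eigenspace z)"
  using assms
proof (induction S arbitrary: v rule: finite_induct)
  case empty
  then show ?case by (simp add: poly_endo_1 span_zero)
next
  case (insert z S)
  let ?A = "[:-z, 1:] ^ N" and ?B = "\<Prod>x\<in>S. [:-x, 1:] ^ N"
  obtain a b where ab: "a * ?A + b * ?B = 1"
    using coprime_bezout_poly[OF coprime_linear_factor_powers[OF insert.hyps(2)]] by blast
  have AB: "\<And>p. poly_endo p f (poly_endo (?A * ?B) f v) = 0"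
    using insert by (simp add: poly_endo_zero_vec[OF linear])
  have "poly_endo ?A f (poly_endo (b * ?B) f v) = 0"
    using AB[of b] by (simp add: poly_endo_mult[OF linear, symmetric] ac_simps)
  then have "poly_endo (b * ?B) f v \<in> gen_eigenspace z"
    by (simp add: gen_eigenspace_def poly_endo_linear_factor_power_shift)
  then have "poly_endo (b * ?B) f v \<in> span (\<Union>x\<in>insert z S. gen_eigenspace x)"
    by (intro span_base) auto
  moreover have "poly_endo ?B f (poly_endo (a * ?A) f v) = 0"
    using AB[of a] by (simp add: poly_endo_mult[OF linear, symmetric] ac_simps)
  then have "poly_endo (a * ?A) f v \<in> span (\<Union>x\<in>S. gen_eigenspace x)"
    by (rule insert.IH)
  then have "poly_endo (a * ?A) f v \<in> span (\<Union>x\<in>insert z S. gen_eigenspace x)"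
    by (rule subsetD[OF span_mono, rotated]) auto
  moreover have "v = poly_endo (a * ?A) f v + poly_endo (b * ?B) f v"
    by (simp only: poly_endo_add[symmetric] ab poly_endo_1)
  ultimately show ?case by (metis span_add)
qed

lemma span_gen_eigenspaces: "v \<in> span (\<Union>z\<in>R. gen_eigenspace z)"
  by (rule span_gen_eigenspaces_subset[OF finite_roots annihilates])

lemma gen_eigenvector_not_root:
  assumes "c \<notin> R" "(shift c ^^ k) v = 0"
  shows "v = 0"
proof -
  obtain a b where ab: "a * [:-c, 1:] ^ k + b * (\<Prod>x\<in>R. [:-x, 1:] ^ N) = 1"
    using coprime_bezout_poly[OF coprime_linear_factor_powers[OF assms(1)]] by blast
  have "v = poly_endo (a * [:-c, 1:] ^ k + b * (\<Prod>x\<in>R. [:-x, 1:] ^ N)) f v"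
    by (simp only: ab poly_endo_1)
  also have "\<dots> = 0"
    using assms(2) annihilates
    by (simp add: poly_endo_add poly_endo_mult[OF linear] poly_endo_zero_vec[OF linear]
        poly_endo_linear_factor_power_shift)
  finally show ?thesis .
qed

lemma ex_shift_into_subspace:
  assumes "finite S" "w \<notin> W" "poly_endo (\<Prod>z\<in>S. [:-z, 1:] ^ N) f w \<in> W"
  shows "\<exists>u z. z \<in> S \<and> u \<notin> W \<and> shift z u \<in> W"
  using assms
proof (induction S arbitrary: w rule: finite_induct)
  case (insert z S)
  let ?w = "poly_endo (\<Prod>x\<in>S. [:-x, 1:] ^ N) f w"
  have "(shift z ^^ N) ?w \<in> W"
    using insert by (simp add: poly_endo_mult[OF linear] poly_endo_linear_factor_power_shift)
  then show ?case
    using insert.IH[OF insert.prems(1)] funpow_enters_set[of UNIV "shift z" ?w W N]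
    by (cases "?w \<in> W") auto
qed (simp add: poly_endo_1)

lemma ex_triangular_flag:
  assumes "k \<le> dim (UNIV :: 'a set)"
  shows "\<exists>bs z. length bs = k \<and> distinct bs \<and> independent (set bs) \<and>
           (\<forall>i<k. z i \<in> R \<and> shift (z i) (bs ! i) \<in> span (set (take i bs)))"
  using assms
proof (induction k)
  case 0 then show ?case by (simp add: independent_empty)
next
  case (Suc k)
  then obtain bs z where bs: "length bs = k" "distinct bs" "independent (set bs)"
     "\<forall>i<k. z i \<in> R \<and> shift (z i) (bs ! i) \<in> span (set (take i bs))" by auto
  have "span (set bs) \<noteq> UNIV"
  proof
    assume "span (set bs) = UNIV"
    then have "dim (UNIV :: 'a set) = k"
      using dim_span_eq_card_independent[OF bs(3)] bs(1,2) by (simp add: distinct_card)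
    then show False using Suc.prems by simp
  qed
  then obtain w where w: "w \<notin> span (set bs)" by blast
  have "poly_endo (\<Prod>z\<in>R. [:-z, 1:] ^ N) f w \<in> span (set bs)"
    by (simp add: annihilates span_zero)
  then obtain u c where uc: "c \<in> R" "u \<notin> span (set bs)" "shift c u \<in> span (set bs)"
    using ex_shift_into_subspace[OF finite_roots w] by blast
  show ?case
  proof (intro exI conjI)
    show "length (bs @ [u]) = Suc k" "distinct (bs @ [u])"
      using bs(1,2) uc(2) span_base by auto
    show "independent (set (bs @ [u]))"
      using independent_insertI[OF uc(2) bs(3)] by simp
    show "\<forall>i<Suc k. (z(k := c)) i \<in> R \<and>
        shift ((z(k := c)) i) ((bs @ [u]) ! i) \<in> span (set (take i (bs @ [u])))"
      using bs(1,4) uc by (auto simp: nth_append less_Suc_eq)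
  qed
qed

lemma ex_triangular_basis: "\<exists>bs z. triangular_basis f bs z \<and> (\<forall>i<length bs. z i \<in> R)"
proof -
  obtain bs z where bs: "length bs = dim (UNIV :: 'a set)" "distinct bs" "independent (set bs)"
     "\<forall>i<length bs. z i \<in> R \<and> shift (z i) (bs ! i) \<in> span (set (take i bs))"
    using ex_triangular_flag[of "dim (UNIV :: 'a set)"] by auto
  then have "triangular_basis f bs z"
    using finite_basis_list[OF bs(2,3,1)] by (simp add: triangular_basis_def shift_def)
  then show ?thesis using bs(4) by blast
qed

end

section \<open>Finite-dimensional complex Lie algebras\<close>

locale fd_lie_algebra =
  fixes sc :: "complex \<Rightarrow> 'a::ab_group_add \<Rightarrow> 'a" and br :: "'a \<Rightarrow> 'a \<Rightarrow> 'a"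
  assumes lie: "lie_algebra sc br" and fin_dim: "finite_dim sc"
begin

sublocale fd_complex_space sc
  using lie fin_dim by (simp add: fd_complex_space_def fd_complex_space_axioms_def lie_algebra_def)

lemma linear_br_right: "linear_endo (br x)"
  using lie by (simp add: lie_algebra_def bilinear_map_def)

lemma linear_br_left: "linear_endo (\<lambda>y. br y z)"
  using lie by (simp add: lie_algebra_def bilinear_map_def)

lemma br_add_right: "br x (y + z) = br x y + br x z"
  by (rule endo.linear_add[OF linear_br_right])
lemma br_add_left: "br (x + y) z = br x z + br y z"
  by (rule endo.linear_add[OF linear_br_left])
lemma br_diff_right: "br x (y - z) = br x y - br x z"
  by (rule endo.linear_diff[OF linear_br_right])
lemma br_diff_left: "br (x - y) z = br x z - br y z"
  by (rule endo.linear_diff[OF linear_br_left])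
lemma br_scale_right: "br x (sc c y) = sc c (br x y)"
  by (rule endo.linear_scale[OF linear_br_right])
lemma br_scale_left: "br (sc c x) y = sc c (br x y)"
  by (rule endo.linear_scale[OF linear_br_left])

lemma br_zero_right [simp]: "br x 0 = 0"
  by (rule endo.linear_0[OF linear_br_right])
lemma br_zero_left [simp]: "br 0 y = 0"
  by (rule endo.linear_0[OF linear_br_left])

lemmas br_bilinear = br_add_right br_add_left br_diff_right br_diff_left br_scale_right br_scale_left

lemma br_self [simp]: "br x x = 0"
  using lie by (simp add: lie_algebra_def)

lemma br_antisym: "br x y = - br y x"
proof -
  have "0 = br (x + y) (x + y)" by simp
  also have "\<dots> = br x y + br y x"
    by (simp only: br_add_left br_add_right) (simp add: add.commute)
  finally show ?thesis by (simp add: eq_neg_iff_add_eq_0)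
qed

lemma br_jacobi: "br x (br y z) = br (br x y) z + br y (br x z)"
proof -
  have "br x (br y z) + br y (br z x) + br z (br x y) = 0"
    using lie by (simp add: lie_algebra_def)
  moreover have "br y (br z x) = - br y (br x z)" and "br z (br x y) = - br (br x y) z"
    by (simp_all only: br_antisym[of z] endo.linear_neg[OF linear_br_right])
  ultimately show ?thesis
    by (simp add: algebra_simps eq_neg_iff_add_eq_0)
qed

definition derivation :: "('a \<Rightarrow> 'a) \<Rightarrow> bool" where
  "derivation D \<longleftrightarrow> linear_endo D \<and> (\<forall>a b. D (br a b) = br (D a) b + br a (D b))"

lemma derivation_ad: "derivation (br x)"
  unfolding derivation_def using linear_br_right br_jacobi by blast

lemma derivation_on_spanning_set:
  assumes E: "linear_endo E" and U: "\<And>v. v \<in> span U"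
    and leibniz: "\<And>a b. a \<in> U \<Longrightarrow> b \<in> U \<Longrightarrow> E (br a b) = br (E a) b + br a (E b)"
  shows "derivation E"
proof -
  let ?P = "\<lambda>a b. E (br a b) = br (E a) b + br a (E b)"
  have sub_left: "subspace {a. ?P a b}" and sub_right: "subspace {b. ?P a b}" for a b
    unfolding subspace_def
    by (simp_all add: br_bilinear endo.linear_add[OF E] endo.linear_scale[OF E] endo.linear_0[OF E]
        scale_right_distrib)
  have "?P a b" if "b \<in> U" for a b
    using span_minimal[OF _ sub_left, of U b] leibniz that U by blast
  then have "?P a b" for a b
    using span_minimal[OF _ sub_right, of U a] U by blast
  then show ?thesis unfolding derivation_def using E by blast
qed

definition killing :: "'a \<Rightarrow> 'a \<Rightarrow> complex" where
  "killing x y = trace (\<lambda>v. br x (br y v))"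

lemma killing_sym: "killing x y = killing y x"
  unfolding killing_def by (rule trace_comp_commute[OF linear_br_right linear_br_right])

lemma killing_add: "killing (x + x') y = killing x y + killing x' y"
  unfolding killing_def br_add_left by (rule trace_add)

lemma killing_scale: "killing (sc c x) y = c * killing x y"
  unfolding killing_def br_scale_left by (rule trace_scale)

lemma killing_derivation_invariant:
  assumes D: "derivation D"
  shows "killing (D x) y + killing x (D y) = 0"
proof -
  have leib: "br (D a) v = D (br a v) - br a (D v)" for a v
    using D by (simp add: derivation_def)
  have lin: "linear_endo D" using D by (simp add: derivation_def)
  have "killing (D x) y = trace (\<lambda>v. D (br x (br y v))) - trace (\<lambda>v. br x (D (br y v)))"
    unfolding killing_def leib by (rule trace_diff)
  moreover have "killing x (D y) = trace (\<lambda>v. br x (D (br y v))) - trace (\<lambda>v. br x (br y (D v)))"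
    unfolding killing_def leib br_diff_right by (rule trace_diff)
  moreover have "trace (\<lambda>v. D (br x (br y v))) = trace (\<lambda>v. br x (br y (D v)))"
    by (rule trace_comp_commute[OF lin linear_endo_comp[OF linear_br_right linear_br_right]])
  ultimately show ?thesis by simp
qed

definition killing_radical :: "'a set" where
  "killing_radical = {x. \<forall>y. killing x y = 0}"

lemma lie_ideal_killing_radical: "lie_ideal sc br killing_radical"
  unfolding lie_ideal_def
proof (intro conjI allI impI)
  show "subspace killing_radical"
    using killing_scale[of 0 0] by (auto simp: subspace_def killing_radical_def killing_add killing_scale)
  fix x y assume "y \<in> killing_radical"
  then show "br x y \<in> killing_radical"
    using killing_derivation_invariant[OF derivation_ad, of x y]
    by (simp add: killing_radical_def eq_neg_iff_add_eq_0)
qed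

lemma CPA_structure_in_killing_radical:
  assumes m: "CPA_structure sc br m"
  shows "m x y \<in> killing_radical"
proof -
  have comm: "\<And>x y. m x y = m y x" and "bilinear_map sc m"
    and "\<And>x y z. m x (br y z) = br (m x y) z + br y (m x z)"
    using m unfolding CPA_structure_def by auto
  then have der: "derivation (m x)" for x
    unfolding derivation_def bilinear_map_def by blast
  define \<beta> where "\<beta> x y z = killing (m x y) z" for x y z
  have sym: "\<beta> x y z = \<beta> y x z" for x y z unfolding \<beta>_def by (simp add: comm)
  have antisym: "\<beta> x y z = - \<beta> x z y" for x y z
    using killing_derivation_invariant[OF der, of x y z] unfolding \<beta>_def
    by (simp add: eq_neg_iff_add_eq_0 killing_sym)
  have "\<beta> x y z = - \<beta> x y z" for z
    by (metis antisym sym minus_minus)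
  then show ?thesis unfolding killing_radical_def \<beta>_def by simp
qed

lemma trace_bracket_killing_radical_derivation:
  assumes x: "x \<in> span {br a b | a b. a \<in> killing_radical}" and E: "derivation E"
  shows "trace (\<lambda>v. br x (E v)) = 0"
proof -
  have lE: "linear_endo E" using E by (simp add: derivation_def)
  have gen: "trace (\<lambda>v. br (br a b) (E v)) = 0" if a: "a \<in> killing_radical" for a b
  proof -
    txt \<open>Jacobi, cyclicity of the trace and the Leibniz rule for \<open>E\<close> give
      \<open>tr(ad [a,b] \<circ> E) = - \<kappa>(a, E b)\<close>.\<close>
    have jac: "br (br a b) w = br a (br b w) - br b (br a w)" for w
      using br_jacobi[of a b w] by (simp add: algebra_simps)
    have leib: "br a (br b (E v)) - br a (E (br b v)) = - br a (br (E b) v)" for v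
      using E by (simp add: derivation_def br_add_right endo.linear_neg[OF linear_br_right])
    have "trace (\<lambda>v. br (br a b) (E v))
        = trace (\<lambda>v. br a (br b (E v))) - trace (\<lambda>v. br b (br a (E v)))"
      unfolding jac by (rule trace_diff)
    also have "trace (\<lambda>v. br b (br a (E v))) = trace (\<lambda>v. br a (E (br b v)))"
      by (rule trace_comp_commute[OF linear_br_right linear_endo_comp[OF linear_br_right lE]])
    also have "trace (\<lambda>v. br a (br b (E v))) - trace (\<lambda>v. br a (E (br b v)))
        = trace (\<lambda>v. - br a (br (E b) v))"
      unfolding trace_diff[symmetric] leib ..
    also have "\<dots> = - killing a (E b)"
      unfolding killing_def by (rule trace_neg)
    finally show ?thesis using a by (simp add: killing_radical_def)
  qed
  have "{br a b | a b. a \<in> killing_radical} \<subseteq> {x. trace (\<lambda>v. br x (E v)) = 0}"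
    using gen by blast
  moreover have "subspace {x. trace (\<lambda>v. br x (E v)) = 0}"
    unfolding subspace_def by (simp add: br_add_left br_scale_left trace_add trace_scale trace_zero)
  ultimately show ?thesis using span_minimal x by blast
qed

end

subsection \<open>Cartan's criterion\<close>

locale annihilated_derivation =
  fd_lie_algebra sc br + annihilated_endo sc D R N
  for sc :: "complex \<Rightarrow> 'a::ab_group_add \<Rightarrow> 'a" and br D R N +
  assumes derivation: "derivation D"
begin

lemma shift_br: "shift (\<alpha> + \<gamma>) (br a b) = br (shift \<alpha> a) b + br a (shift \<gamma> b)"
  using derivation
  by (simp add: derivation_def shift_def br_bilinear scale_left_distrib algebra_simps)

lemma shift_power_br:
  "(shift \<alpha> ^^ i) a = 0 \<Longrightarrow> (shift \<gamma> ^^ j) b = 0 \<Longrightarrow> (shift (\<alpha> + \<gamma>) ^^ (i + j)) (br a b) = 0"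
proof (induction "i + j" arbitrary: i j a b)
  case 0 then show ?case by simp
next
  case (Suc n)
  show ?case
  proof (cases "i = 0 \<or> j = 0")
    case True
    then show ?thesis using Suc.prems endo.linear_0[OF linear_endo_funpow[OF linear_shift]] by auto
  next
    case False
    then obtain i' j' where i': "i = Suc i'" and j': "j = Suc j'" by (metis not0_implies_Suc)
    have a': "(shift \<alpha> ^^ i') (shift \<alpha> a) = 0" and b': "(shift \<gamma> ^^ j') (shift \<gamma> b) = 0"
      using Suc.prems i' j' by (simp_all only: funpow_Suc_right o_apply)
    have n: "n = i' + j" "n = i + j'" using Suc.hyps(2) i' j' by simp_all
    have "(shift (\<alpha> + \<gamma>) ^^ Suc n) (br a b) = (shift (\<alpha> + \<gamma>) ^^ n) (shift (\<alpha> + \<gamma>) (br a b))"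
      by (simp only: funpow_Suc_right o_apply)
    also have "\<dots> = (shift (\<alpha> + \<gamma>) ^^ n) (br (shift \<alpha> a) b)
        + (shift (\<alpha> + \<gamma>) ^^ n) (br a (shift \<gamma> b))"
      by (simp only: shift_br endo.linear_add[OF linear_endo_funpow[OF linear_shift]])
    also have "\<dots> = 0"
    proof -
      have "(shift (\<alpha> + \<gamma>) ^^ n) (br (shift \<alpha> a) b) = 0"
        using Suc.hyps(1)[OF n(1) a' Suc.prems(2)] n(1) by simp
      moreover have "(shift (\<alpha> + \<gamma>) ^^ n) (br a (shift \<gamma> b)) = 0"
        using Suc.hyps(1)[OF n(2) Suc.prems(1) b'] n(2) by simp
      ultimately show ?thesis by simp
    qed
    finally show ?thesis by (simp only: Suc.hyps(2))
  qed
qed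

text \<open>The polynomial \<open>conj_poly\<close> is congruent to \<open>cnj z\<close> modulo \<open>(X - z)^(2N)\<close> at every root
  \<open>z\<close>, so \<open>poly_endo conj_poly D\<close> acts on each generalized eigenspace of \<open>D\<close> as the scalar
  \<open>cnj z\<close>: it is the "complex conjugate" of the semisimple part of \<open>D\<close>. The exponent \<open>2N\<close>
  is needed because brackets of generalized eigenvectors are only killed by \<open>(D - \<alpha> - \<gamma>)^(2N)\<close>.\<close>
definition conj_poly :: "complex poly" where
  "conj_poly = (SOME q. \<forall>z\<in>R. [:-z, 1:] ^ (2 * N) dvd q - [:cnj z:])"

lemma conj_poly_congruent: "z \<in> R \<Longrightarrow> [:-z, 1:] ^ (2 * N) dvd conj_poly - [:cnj z:]"
  unfolding conj_poly_def by (rule someI_ex[OF ex_poly_congruent_constants[OF finite_roots], rule_format])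

lemma poly_conj_poly: "z \<in> R \<Longrightarrow> poly conj_poly z = cnj z"
  using conj_poly_congruent[of z] N_pos
  by (auto elim!: dvdE simp: poly_power algebra_simps diff_eq_eq)

lemma poly_endo_conj_poly_gen_eigenvector:
  assumes z: "z \<in> R" and v: "(shift z ^^ (2 * N)) v = 0"
  shows "poly_endo conj_poly D v = sc (cnj z) v"
proof -
  obtain h where h: "conj_poly = [:cnj z:] + h * [:-z, 1:] ^ (2 * N)"
    using conj_poly_congruent[OF z] by (auto elim!: dvdE simp: algebra_simps)
  show ?thesis
    using v unfolding h
    by (simp add: poly_endo_add poly_endo_const poly_endo_mult[OF linear]
        poly_endo_linear_factor_power_shift poly_endo_zero_vec[OF linear])
qed

lemma gen_eigenspace_double: "v \<in> gen_eigenspace z \<Longrightarrow> (shift z ^^ (2 * N)) v = 0"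
  using endo.linear_0[OF linear_endo_funpow[OF linear_shift]]
  by (simp add: gen_eigenspace_def mult_2 funpow_add)

lemma derivation_poly_endo_conj_poly: "derivation (poly_endo conj_poly D)"
proof (rule derivation_on_spanning_set[OF linear_poly_endo[OF linear] span_gen_eigenspaces])
  let ?E = "poly_endo conj_poly D"
  fix a b assume "a \<in> (\<Union>z\<in>R. gen_eigenspace z)" "b \<in> (\<Union>z\<in>R. gen_eigenspace z)"
  then obtain \<alpha> \<gamma> where \<alpha>: "\<alpha> \<in> R" "a \<in> gen_eigenspace \<alpha>" and \<gamma>: "\<gamma> \<in> R" "b \<in> gen_eigenspace \<gamma>"
    by blast
  have Ea: "?E a = sc (cnj \<alpha>) a" and Eb: "?E b = sc (cnj \<gamma>) b"
    using \<alpha> \<gamma> by (simp_all add: poly_endo_conj_poly_gen_eigenvector gen_eigenspace_double)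
  have ab: "(shift (\<alpha> + \<gamma>) ^^ (2 * N)) (br a b) = 0"
    using shift_power_br[of N \<alpha> a N \<gamma> b] \<alpha> \<gamma> by (simp add: gen_eigenspace_def mult_2)
  have "?E (br a b) = sc (cnj (\<alpha> + \<gamma>)) (br a b)"
  proof (cases "\<alpha> + \<gamma> \<in> R")
    case True then show ?thesis by (rule poly_endo_conj_poly_gen_eigenvector[OF _ ab])
  next
    case False
    then have "br a b = 0" using gen_eigenvector_not_root ab by blast
    then show ?thesis by (simp add: poly_endo_zero_vec[OF linear])
  qed
  then show "?E (br a b) = br (?E a) b + br a (?E b)"
    unfolding Ea Eb by (simp add: br_bilinear scale_left_distrib)
qed

text \<open>In a triangular basis with diagonal \<open>z\<^sub>i\<close>, the trace of \<open>D \<circ> conj_poly(D)\<close> is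
  \<open>\<Sum> z\<^sub>i cnj z\<^sub>i = \<Sum> |z\<^sub>i|\<^sup>2\<close>.\<close>
lemma nilpotent_if_trace_orthogonal_derivations:
  assumes orth: "\<And>E. derivation E \<Longrightarrow> trace (\<lambda>v. D (E v)) = 0"
  shows "(D ^^ dim (UNIV :: 'a set)) v = 0"
proof -
  obtain bs z where tri: "triangular_basis D bs z" and zR: "\<And>i. i < length bs \<Longrightarrow> z i \<in> R"
    using ex_triangular_basis by blast
  have "(\<lambda>v. D (poly_endo conj_poly D v)) = poly_endo ([:0, 1:] * conj_poly) D"
    by (simp add: fun_eq_iff poly_endo_mult[OF linear] poly_endo_pCons[OF linear] poly_endo_0)
  then have "0 = trace (poly_endo ([:0, 1:] * conj_poly) D)"
    using orth[OF derivation_poly_endo_conj_poly] by simp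
  also have "\<dots> = (\<Sum>i<length bs. z i * cnj (z i))"
    using zR by (simp add: trace_poly_endo_triangular_basis[OF linear tri] poly_conj_poly)
  also have "\<dots> = complex_of_real (\<Sum>i<length bs. (cmod (z i))\<^sup>2)"
    by (simp only: complex_norm_square[symmetric] of_real_sum)
  finally have "complex_of_real (\<Sum>i<length bs. (cmod (z i))\<^sup>2) = 0" by (rule sym)
  then have "(\<Sum>i<length bs. (cmod (z i))\<^sup>2) = 0" by (rule of_real_eq_0_iff[THEN iffD1])
  then have "z i = 0" if "i < length bs" for i
    using that by (simp add: sum_nonneg_eq_0_iff)
  then have "triangular_basis D bs (\<lambda>_. 0)"
    using tri by (simp add: triangular_basis_def)
  from triangular_basis_nilpotent[OF linear this] show ?thesis
    using length_triangular_basis[OF tri] by simp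
qed

end

context fd_lie_algebra
begin

lemma ad_nilpotent_if_trace_orthogonal_derivations:
  assumes "\<And>E. derivation E \<Longrightarrow> trace (\<lambda>v. br x (E v)) = 0"
  shows "(br x ^^ dim (UNIV :: 'a set)) v = 0"
proof -
  obtain R N where "finite R" "0 < N" "\<forall>v. poly_endo (\<Prod>z\<in>R. [:-z, 1:] ^ N) (br x) v = 0"
    using ex_annihilating_root_product[OF linear_br_right] by blast
  then interpret annihilated_derivation sc br "br x" R N
    by unfold_locales (simp_all add: derivation_ad br_add_right br_scale_right)
  show ?thesis by (rule nilpotent_if_trace_orthogonal_derivations[OF assms])
qed

subsection \<open>Engel's theorem\<close>

definition lie_subalgebra :: "'a set \<Rightarrow> bool" where
  "lie_subalgebra A \<longleftrightarrow> subspace A \<and> (\<forall>x\<in>A. \<forall>y\<in>A. br x y \<in> A)"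

definition ad_nilpotent :: "'a \<Rightarrow> bool" where
  "ad_nilpotent x \<longleftrightarrow> (\<exists>k. \<forall>v. (br x ^^ k) v = 0)"

definition ad_invariant :: "'a set \<Rightarrow> 'a set \<Rightarrow> bool" where
  "ad_invariant M W \<longleftrightarrow> (\<forall>x\<in>M. \<forall>w\<in>W. br x w \<in> W)"

lemma dim_less_subspace:
  assumes "subspace A" "subspace B" "A \<subset> B"
  shows "dim A < dim B"
proof -
  have spans: "span A = A" "span B = B" using assms(1,2) by (simp_all add: span_eq_iff)
  from fd.dim_psubset[of A B] show ?thesis unfolding spans using assms(3) .
qed

lemma span_insert_subspace_decompose:
  assumes "subspace A" "y \<in> span (insert x A)"
  obtains c where "y - sc c x \<in> A"
  using assms span_breakdown_eq[of y x A] by (auto simp: span_eq_iff[THEN iffD2])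

lemma lie_subalgebra_span_insert:
  assumes A: "lie_subalgebra A" and x: "\<forall>a\<in>A. br a x \<in> A"
  shows "lie_subalgebra (span (insert x A))"
proof -
  have sA: "subspace A" and cA: "\<And>a b. a \<in> A \<Longrightarrow> b \<in> A \<Longrightarrow> br a b \<in> A"
    using A by (auto simp: lie_subalgebra_def)
  have xA: "br x a \<in> A" if "a \<in> A" for a
    using x that subspace_neg[OF sA] br_antisym[of x a] by simp
  have "br y y' \<in> span (insert x A)" if y: "y \<in> span (insert x A)" and y': "y' \<in> span (insert x A)" for y y'
  proof -
    obtain c where a: "y - sc c x \<in> A" using span_insert_subspace_decompose[OF sA y] .
    obtain c' where a': "y' - sc c' x \<in> A" using span_insert_subspace_decompose[OF sA y'] .
    define a where "a = y - sc c x"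
    define a' where "a' = y' - sc c' x"
    have "br y y' = br a a' + sc c' (br a x) + sc c (br x a')"
      by (simp add: a_def a'_def br_bilinear algebra_simps)
    also have "\<dots> \<in> A"
      using a a' x xA cA sA unfolding a_def[symmetric] a'_def[symmetric]
      by (simp add: subspace_add subspace_scale)
    finally show ?thesis by (rule span_base[OF insertI2])
  qed
  then show ?thesis by (simp add: lie_subalgebra_def)
qed

lemma ex_max_dim_proper_subalgebra:
  assumes "lie_subalgebra M" "\<not> M \<subseteq> {0}"
  shows "\<exists>A. lie_subalgebra A \<and> A \<subseteq> M \<and> A \<noteq> M \<and>
           (\<forall>B. lie_subalgebra B \<and> B \<subseteq> M \<and> B \<noteq> M \<longrightarrow> dim B \<le> dim A)"
proof -
  let ?Sub = "\<lambda>A. lie_subalgebra A \<and> A \<subseteq> M \<and> A \<noteq> M"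
  have "?Sub {0}"
    using assms by (auto simp: lie_subalgebra_def subspace_def)
  moreover have "dim A < Suc (dim M)" if "?Sub A" for A
    using that fd.dim_subset[of A M] by simp
  ultimately show ?thesis
    using ex_has_greatest_nat[of ?Sub "{0}" dim "Suc (dim M)"] by blast
qed

lemma span_insert_eq_if_max_dim_subalgebra:
  assumes M: "lie_subalgebra M" and A: "lie_subalgebra A" "A \<subseteq> M"
    and max: "\<And>B. lie_subalgebra B \<Longrightarrow> B \<subseteq> M \<Longrightarrow> B \<noteq> M \<Longrightarrow> dim B \<le> dim A"
    and x: "x \<in> M" "x \<notin> A" "\<forall>a\<in>A. br a x \<in> A"
  shows "M = span (insert x A)"
proof -
  have sA: "subspace A" and sM: "subspace M" using A(1) M by (simp_all add: lie_subalgebra_def)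
  have sub: "lie_subalgebra (span (insert x A))" "span (insert x A) \<subseteq> M"
    using lie_subalgebra_span_insert[OF A(1) x(3)] x(1) A(2) span_minimal[OF _ sM] by auto
  have "A \<subset> span (insert x A)" using x(2) span_superset[of "insert x A"] by auto
  then have "dim A < dim (span (insert x A))"
    using sA by (intro dim_less_subspace) simp_all
  then show ?thesis using max[OF sub] by fastforce
qed

lemma br_span_insert_left:
  assumes "subspace A" "subspace W'" "\<forall>a\<in>A. br a v \<in> W'" "br x v \<in> W'"
    and "y \<in> span (insert x A)"
  shows "br y v \<in> W'"
proof -
  obtain c where "y - sc c x \<in> A" using span_insert_subspace_decompose[OF assms(1,5)] .
  then have "br (y - sc c x) v \<in> W'" using assms(3) by blast
  moreover have "br y v = br (y - sc c x) v + sc c (br x v)" by (simp add: br_bilinear)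
  ultimately show ?thesis using assms(2,4) by (metis subspace_add subspace_scale)
qed

lemma normalizer_preserves_killed_vectors:
  assumes "x \<in> M" "A \<subseteq> M" "\<forall>a\<in>A. br a x \<in> A" "subspace W'"
    "ad_invariant M W" "ad_invariant M W'" "u \<in> W" "\<forall>a\<in>A. br a u \<in> W'"
  shows "br x u \<in> W \<and> (\<forall>a\<in>A. br a (br x u) \<in> W')"
proof -
  have "br a (br x u) \<in> W'" if a: "a \<in> A" for a
  proof -
    have "br (br a x) u \<in> W'" "br x (br a u) \<in> W'"
      using assms a unfolding ad_invariant_def by blast+
    then show ?thesis using br_jacobi[of a x u] subspace_add[OF assms(4)] by simp
  qed
  moreover have "br x u \<in> W" using assms(1,5,7) by (simp add: ad_invariant_def)
  ultimately show ?thesis by blast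
qed

text \<open>A proper subalgebra \<open>A\<close> of maximal dimension is normalized by some
  \<open>x \<in> M - A\<close> (the hypothesis for \<open>A\<close> acting on \<open>M / A\<close>), so \<open>M = A + \<complex>x\<close>. The hypothesis for
  \<open>A\<close> acting on \<open>W / W'\<close> gives a vector outside \<open>W'\<close> in the space \<open>U\<close> of vectors that \<open>A\<close> maps
  into \<open>W'\<close>; since \<open>U\<close> is \<open>ad x\<close>-invariant and \<open>ad x\<close> is nilpotent, \<open>ad x\<close> maps some vector
  of \<open>U - W'\<close> into \<open>W'\<close>.\<close>
lemma engel_invariant_step:
  assumes "lie_subalgebra M" "\<forall>x\<in>M. ad_nilpotent x"
    and "subspace W'" "W' \<subset> W" "ad_invariant M W" "ad_invariant M W'"
  shows "\<exists>v\<in>W. v \<notin> W' \<and> (\<forall>x\<in>M. br x v \<in> W')"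
  using assms
proof (induction "dim M" arbitrary: M W W' rule: less_induct)
  case less
  have sM: "subspace M" using less.prems(1) by (simp add: lie_subalgebra_def)
  show ?case
  proof (cases "M \<subseteq> {0}")
    case True
    obtain v where "v \<in> W" "v \<notin> W'" using less.prems(4) by blast
    moreover have "br x v \<in> W'" if "x \<in> M" for x
      using True that subspace_0[OF less.prems(3)] by auto
    ultimately show ?thesis by blast
  next
    case False
    obtain A where A: "lie_subalgebra A" "A \<subseteq> M" "A \<noteq> M"
      and Amax: "\<And>B. lie_subalgebra B \<Longrightarrow> B \<subseteq> M \<Longrightarrow> B \<noteq> M \<Longrightarrow> dim B \<le> dim A"
      using ex_max_dim_proper_subalgebra[OF less.prems(1) False] by blast
    have sA: "subspace A" using A(1) by (simp add: lie_subalgebra_def)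
    have dA: "dim A < dim M" using A sM sA by (simp add: dim_less_subspace psubset_eq)
    have nilA: "\<forall>x\<in>A. ad_nilpotent x" using less.prems(2) A(2) by blast
    have "ad_invariant A M" "ad_invariant A A"
      using A(1,2) less.prems(1) by (auto simp: ad_invariant_def lie_subalgebra_def)
    then obtain x where x: "x \<in> M" "x \<notin> A" and xA: "\<forall>a\<in>A. br a x \<in> A"
      using less.hyps[OF dA A(1) nilA sA] A(2,3) by blast
    have MA: "M = span (insert x A)"
      by (rule span_insert_eq_if_max_dim_subalgebra[OF less.prems(1) A(1,2) Amax x xA])
    define U where "U = {w\<in>W. \<forall>a\<in>A. br a w \<in> W'}"
    have "ad_invariant A W" "ad_invariant A W'"
      using less.prems(5,6) A(2) by (auto simp: ad_invariant_def)
    then obtain v0 where v0: "v0 \<in> U" "v0 \<notin> W'"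
      using less.hyps[OF dA A(1) nilA less.prems(3,4)] by (auto simp: U_def)
    obtain k where "\<forall>v. (br x ^^ k) v = 0"
      using less.prems(2) x(1) by (auto simp: ad_nilpotent_def)
    then have "(br x ^^ k) v0 \<in> W'" using subspace_0[OF less.prems(3)] by simp
    moreover have "\<And>u. u \<in> U \<Longrightarrow> br x u \<in> U"
      using normalizer_preserves_killed_vectors[OF x(1) A(2) xA less.prems(3,5,6)]
      by (auto simp: U_def)
    ultimately obtain v where v: "v \<in> U" "v \<notin> W'" "br x v \<in> W'"
      using funpow_enters_set[of U "br x" v0 W' k] v0 by blast
    have "br y v \<in> W'" if "y \<in> M" for y
      using br_span_insert_left[OF sA less.prems(3) _ v(3)] v(1) that MA by (auto simp: U_def)
    then show ?thesis using v by (auto simp: U_def)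
  qed
qed

text \<open>Iterating the step gives an \<open>M\<close>-invariant flag from \<open>W'\<close> to the whole space in which
  every element of \<open>M\<close> lowers the level.\<close>
lemma engel_flag:
  assumes "lie_subalgebra M" "\<forall>x\<in>M. ad_nilpotent x" "subspace W'" "ad_invariant M W'"
    and "set xs \<subseteq> M" "dim (UNIV :: 'a set) \<le> length xs + dim W'"
  shows "foldr br xs w \<in> W'"
  using assms(3-)
proof (induction "dim (UNIV :: 'a set) - dim W'" arbitrary: W' xs rule: less_induct)
  case less
  show ?case
  proof (cases "W' = UNIV")
    case False
    obtain v where v: "v \<notin> W'" "\<forall>x\<in>M. br x v \<in> W'"
      using engel_invariant_step[OF assms(1,2) less.prems(1) _ _ less.prems(2)] False
      by (auto simp: ad_invariant_def)
    define W'' where "W'' = span (insert v W')"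
    have sW'': "subspace W''" by (simp add: W''_def)
    have inv: "br x y \<in> W'" if x: "x \<in> M" and y: "y \<in> W''" for x y
    proof -
      obtain c where "y - sc c v \<in> W'"
        using span_insert_subspace_decompose[OF less.prems(1)] y by (metis W''_def)
      then show ?thesis
        using less.prems(1,2) v(2) x br_diff_right[of x y "sc c v"]
        by (metis ad_invariant_def br_scale_right diff_add_cancel subspace_add subspace_scale)
    qed
    have "W' \<subset> W''" using v(1) span_superset[of "insert v W'"] by (auto simp: W''_def)
    then have dl: "dim W' < dim W''" by (rule dim_less_subspace[OF less.prems(1) sW''])
    have du: "dim W'' \<le> dim (UNIV :: 'a set)" by (rule fd.dim_subset) simp
    show ?thesis
    proof (cases xs)
      case Nil
      then show ?thesis using less.prems(4) dl du by simp
    next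
      case (Cons x xs')
      have "foldr br xs' w \<in> W''"
        using less.prems(3,4) Cons dl du inv \<open>W' \<subset> W''\<close>
        by (intro less.hyps[OF _ sW'']) (auto simp: ad_invariant_def)
      then show ?thesis using Cons inv less.prems(3) by simp
    qed
  qed simp
qed

subsection \<open>Solvability of the Killing radical\<close>

lemma derived_series_Suc_shift:
  "derived_series sc br I (Suc j) = derived_series sc br (derived_series sc br I 1) j"
  by (induction j) simp_all

text \<open>Nilpotent subalgebras are solvable: by induction on \<open>j\<close>, the \<open>j\<close>-th derived algebra is
  killed by every word of length \<open>n - j\<close> in \<open>M\<close>.\<close>
lemma derived_series_vanishes_if_words_vanish:
  assumes M: "lie_subalgebra M"
    and words: "\<And>xs w. set xs \<subseteq> M \<Longrightarrow> n \<le> length xs \<Longrightarrow> foldr br xs w = 0"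
  shows "derived_series sc br M n = {0}"
proof -
  define Z where "Z j = {y. \<forall>xs. set xs \<subseteq> M \<longrightarrow> n \<le> length xs + j \<longrightarrow> foldr br xs y = 0}" for j
  have linear_word: "linear_endo (foldr br xs)" for xs
    by (induction xs) (simp_all add: linear_endo_ident linear_endo_comp linear_br_right comp_def id_def)
  have sZ: "subspace (Z j)" for j
    unfolding subspace_def Z_def
    by (simp add: endo.linear_0[OF linear_word] endo.linear_add[OF linear_word]
        endo.linear_scale[OF linear_word])
  have sM: "subspace M" and cM: "\<And>x y. x \<in> M \<Longrightarrow> y \<in> M \<Longrightarrow> br x y \<in> M"
    using M by (auto simp: lie_subalgebra_def)
  have derived_Z: "derived_series sc br M j \<subseteq> M \<inter> Z j" for j
  proof (induction j)
    case 0 then show ?case using words by (auto simp: Z_def)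
  next
    case (Suc j)
    have "br x y \<in> M \<inter> Z (Suc j)"
      if "x \<in> derived_series sc br M j" "y \<in> derived_series sc br M j" for x y
    proof -
      have x: "x \<in> M" and y: "y \<in> M" "y \<in> Z j" using that Suc.IH by auto
      have "foldr br xs (br x y) = 0" if "set xs \<subseteq> M" "n \<le> length xs + Suc j" for xs
        using y(2) that x unfolding Z_def by (auto dest!: spec[of _ "xs @ [x]"])
      then show ?thesis using cM[OF x y(1)] by (simp add: Z_def)
    qed
    then show ?case
      unfolding derived_series.simps
      by (intro span_minimal subspace_inter[OF sM sZ]) blast
  qed
  have "y = 0" if "y \<in> derived_series sc br M n" for y
  proof -
    have "y \<in> Z n" using that derived_Z by blast
    from this[unfolded Z_def mem_Collect_eq, rule_format, of "[]"] show ?thesis by simp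
  qed
  moreover have "subspace (derived_series sc br M n)"
    using sM by (cases n) simp_all
  ultimately show ?thesis using subspace_0 by blast
qed

lemma solvable_killing_radical: "solvable_set sc br killing_radical"
proof -
  let ?K = "killing_radical" and ?n = "dim (UNIV :: 'a set)"
  define K1 where "K1 = derived_series sc br ?K 1"
  have K1: "K1 = span {br x y | x y. x \<in> ?K \<and> y \<in> ?K}" by (simp add: K1_def)
  have sK: "subspace ?K" and idK: "\<And>x y. y \<in> ?K \<Longrightarrow> br x y \<in> ?K"
    using lie_ideal_killing_radical by (auto simp: lie_ideal_def)
  have "{br x y | x y. x \<in> ?K \<and> y \<in> ?K} \<subseteq> ?K" using idK by blast
  then have K1K: "K1 \<subseteq> ?K" unfolding K1 using sK by (rule span_minimal)
  have sub: "lie_subalgebra K1"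
  proof -
    have "br x y \<in> K1" if "x \<in> K1" "y \<in> K1" for x y
      using that K1K unfolding K1 by (blast intro: span_base)
    then show ?thesis by (simp add: lie_subalgebra_def K1)
  qed
  have nil: "\<forall>x\<in>K1. ad_nilpotent x"
  proof
    fix x assume "x \<in> K1"
    then have "x \<in> span {br a b | a b. a \<in> ?K}"
      unfolding K1 by (rule subsetD[OF span_mono, rotated]) blast
    then have "(br x ^^ ?n) v = 0" for v
      using ad_nilpotent_if_trace_orthogonal_derivations trace_bracket_killing_radical_derivation
      by blast
    then show "ad_nilpotent x" unfolding ad_nilpotent_def by blast
  qed
  have "foldr br xs w = 0" if "set xs \<subseteq> K1" "?n \<le> length xs" for xs w
    using engel_flag[OF sub nil subspace_single_0, of xs w] that
    by (simp add: ad_invariant_def)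
  then have "derived_series sc br K1 ?n = {0}"
    by (rule derived_series_vanishes_if_words_vanish[OF sub])
  then show ?thesis
    unfolding solvable_set_def K1_def derived_series_Suc_shift[symmetric] by blast
qed

end

theorem proposition3p1:
  fixes sc :: "complex \<Rightarrow> 'a::ab_group_add \<Rightarrow> 'a" and br :: "'a \<Rightarrow> 'a \<Rightarrow> 'a"
  assumes "lie_algebra sc br" and "finite_dim sc"
  shows "(semisimple sc br \<longrightarrow> (\<forall>m. CPA_structure sc br m \<longrightarrow> (\<forall>x y. m x y = 0)))
       \<and> (\<forall>m. CPA_structure sc br m \<longrightarrow> (\<forall>x y. m x y \<in> lie_radical sc br))"
proof -
  interpret fd_lie_algebra sc br using assms by unfold_locales
  have rad: "lie_ideal sc br killing_radical" "solvable_set sc br killing_radical"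
    by (rule lie_ideal_killing_radical, rule solvable_killing_radical)
  show ?thesis
  proof (intro conjI impI allI)
    fix m x y assume "semisimple sc br" "CPA_structure sc br m"
    then show "m x y = 0"
      using rad CPA_structure_in_killing_radical unfolding semisimple_def by blast
  next
    fix m x y assume "CPA_structure sc br m"
    then have "m x y \<in> \<Union>{I. lie_ideal sc br I \<and> solvable_set sc br I}"
      using rad CPA_structure_in_killing_radical by blast
    then show "m x y \<in> lie_radical sc br"
      unfolding lie_radical_def by (rule span_base)
  qed
qed

end
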